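(* Let $X=(V,E,T)$ be an $(s,k,K)$-two layer system with weight function $w$. Let $A\subseteq E$ and $U\subseteq V$, and for $0\le i\le k$ let $A^i_U=\{\tau\in A:|U\cap\tau|=i\}$. Then $$\sum_{i=1}^k i\,w(A^i_U)\le\sum_{v\in U}m_v(A_v)\le (s-1)\sum_{i=1}^k i\,w(A^i_U).$$ In particular, for every $A\subseteq E$ and every $U\subseteq V$, $\sum_{v\in U}m_v(A_v)\le (s-1)k\,w(A)$.
   Context: Let $s,k,K$ be positive integers. An $(s,k,K)$-two layer system is a triple $X=(V,E,T)$ where: $V$ is a finite set; $E\subseteq 2^V$ with $|\tau|=k$ for every $\tau\in E$ and $\bigcup_{\tau\in E}\tau=V$; $T\subseteq 2^E$ with $|\sigma|=K$ for every $\sigma\in T$ and $\bigcup_{\sigma\in T}\sigma=E$. For $v\in V$, $\sigma\in T$ write $v\in\sigma$ if $v\in\tau$ for some $\tau\in\sigma$; it is required that $2\le|\{\tau\in\sigma:v\in\tau\}|\le s$ for all $\sigma\in T$, $v\in\sigma$. A positive function $w:T\to\mathbb{R}_{>0}$ is fixed and extended by $w(\tau)=\sum_{\sigma\in T,\tau\in\sigma}w(\sigma)$ ($\tau\in E$), $w(v)=\sum_{\sigma\in T,v\in\sigma}w(\sigma)$ ($v\in V$), $w(B)=\sum_{\eta\in B}w(\eta)$. For $v\in V$ let $E_v=\{\tau\in E:v\in\tau\}$. The link of $v$ is the graph with vertex set $E_v$ in which distinct $\tau_1,\tau_2\in E_v$ are adjacent iff some $\sigma\in T$ contains both, with edge weight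 $m_v(\{\tau_1,\tau_2\})=\sum_{\sigma\in T,\ \tau_1,\tau_2\in\sigma}w(\sigma)$; for $\tau\in E_v$, $m_v(\tau)$ is the sum of $m_v$ over the link edges containing $\tau$, and $m_v(B)=\sum_{\tau\in B}m_v(\tau)$ for $B\subseteq E_v$. For $A\subseteq E$, $A_v=A\cap E_v$. *)

theory Defs
  imports Complex_Main
begin

definition vin :: "'v \<Rightarrow> 'v set set \<Rightarrow> bool" where
  "vin v \<sigma> \<longleftrightarrow> (\<exists>\<tau>\<in>\<sigma>. v \<in> \<tau>)"

definition two_layer_system ::
  "nat \<Rightarrow> nat \<Rightarrow> nat \<Rightarrow> 'v set \<Rightarrow> 'v set set \<Rightarrow> 'v set set set \<Rightarrow> bool" where
  "two_layer_system s k K V E T \<longleftrightarrow>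
     0 < s \<and> 0 < k \<and> 0 < K \<and>
     finite V \<and>
     E \<subseteq> Pow V \<and> (\<forall>\<tau>\<in>E. card \<tau> = k) \<and> \<Union>E = V \<and>
     T \<subseteq> Pow E \<and> (\<forall>\<sigma>\<in>T. card \<sigma> = K) \<and> \<Union>T = E \<and>
     (\<forall>\<sigma>\<in>T. \<forall>v. vin v \<sigma> \<longrightarrow>
        2 \<le> card {\<tau>\<in>\<sigma>. v \<in> \<tau>} \<and> card {\<tau>\<in>\<sigma>. v \<in> \<tau>} \<le> s)"

definition wE :: "'v set set set \<Rightarrow> ('v set set \<Rightarrow> real) \<Rightarrow> 'v set \<Rightarrow> real" where
  "wE T w \<tau> = (\<Sum>\<sigma>\<in>{\<sigma>\<in>T. \<tau> \<in> \<sigma>}. w \<sigma>)"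

definition wEset :: "'v set set set \<Rightarrow> ('v set set \<Rightarrow> real) \<Rightarrow> 'v set set \<Rightarrow> real" where
  "wEset T w B = (\<Sum>\<tau>\<in>B. wE T w \<tau>)"

definition Ev :: "'v set set \<Rightarrow> 'v \<Rightarrow> 'v set set" where
  "Ev E v = {\<tau>\<in>E. v \<in> \<tau>}"

definition link_adj :: "'v set set \<Rightarrow> 'v set set set \<Rightarrow> 'v \<Rightarrow> 'v set \<Rightarrow> 'v set \<Rightarrow> bool" where
  "link_adj E T v \<tau>1 \<tau>2 \<longleftrightarrow> \<tau>1 \<in> Ev E v \<and> \<tau>2 \<in> Ev E v \<and> \<tau>1 \<noteq> \<tau>2 \<and>
      (\<exists>\<sigma>\<in>T. \<tau>1 \<in> \<sigma> \<and> \<tau>2 \<in> \<sigma>)"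

definition m_edge :: "'v set set set \<Rightarrow> ('v set set \<Rightarrow> real) \<Rightarrow> 'v set \<Rightarrow> 'v set \<Rightarrow> real" where
  "m_edge T w \<tau>1 \<tau>2 = (\<Sum>\<sigma>\<in>{\<sigma>\<in>T. \<tau>1 \<in> \<sigma> \<and> \<tau>2 \<in> \<sigma>}. w \<sigma>)"

definition m_vert :: "'v set set \<Rightarrow> 'v set set set \<Rightarrow> ('v set set \<Rightarrow> real) \<Rightarrow> 'v \<Rightarrow> 'v set \<Rightarrow> real" where
  "m_vert E T w v \<tau> = (\<Sum>\<tau>'\<in>{\<tau>'. link_adj E T v \<tau> \<tau>'}. m_edge T w \<tau> \<tau>')"

definition m_set :: "'v set set \<Rightarrow> 'v set set set \<Rightarrow> ('v set set \<Rightarrow> real) \<Rightarrow> 'v \<Rightarrow> 'v set set \<Rightarrow> real" where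
  "m_set E T w v B = (\<Sum>\<tau>\<in>B. m_vert E T w v \<tau>)"

definition level_set :: "'v set set \<Rightarrow> 'v set \<Rightarrow> nat \<Rightarrow> 'v set set" where
  "level_set A U i = {\<tau>\<in>A. card (U \<inter> \<tau>) = i}"

end

theory Submission
  imports Defs
begin

text \<open>Counting the link edges at \<open>\<tau>\<close> face by face gives
  \<open>m\<^sub>v(\<tau>) = \<Sum>\<^bsub>\<sigma> \<ni> \<tau>\<^esub> w(\<sigma>) (|{\<tau>' \<in> \<sigma>. v \<in> \<tau>'}| - 1)\<close>, and the multiplicity
  \<open>|{\<tau>' \<in> \<sigma>. v \<in> \<tau>'}|\<close> lies between 2 and \<open>s\<close>, so \<open>w(\<tau>) \<le> m\<^sub>v(\<tau>) \<le> (s - 1) w(\<tau>)\<close>.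
  Summing over the pairs \<open>(v, \<tau>)\<close> with \<open>\<tau> \<in> A\<close> and \<open>v \<in> U \<inter> \<tau>\<close> in both orders,
  each \<open>\<tau>\<close> is counted \<open>|U \<inter> \<tau>| \<le> k\<close> times.\<close>

lemma two_layer_system_finite_edges:
  assumes "two_layer_system s k K V E T"
  shows "finite E"
proof -
  have "finite V" "E \<subseteq> Pow V"
    using assms unfolding two_layer_system_def by auto
  then show ?thesis
    by (meson finite_Pow_iff finite_subset)
qed

lemma two_layer_system_multiplicity_bounds:
  assumes "two_layer_system s k K V E T" and "\<sigma> \<in> T" and "\<tau> \<in> \<sigma>" and "v \<in> \<tau>"
  shows "2 \<le> card {\<tau>'\<in>\<sigma>. v \<in> \<tau>'}" and "card {\<tau>'\<in>\<sigma>. v \<in> \<tau>'} \<le> s"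
proof -
  have "vin v \<sigma>" using assms(3,4) unfolding vin_def by auto
  then show "2 \<le> card {\<tau>'\<in>\<sigma>. v \<in> \<tau>'}" and "card {\<tau>'\<in>\<sigma>. v \<in> \<tau>'} \<le> s"
    using assms(1,2) unfolding two_layer_system_def by blast+
qed

lemma wE_nonneg:
  assumes "\<forall>\<sigma>\<in>T. w \<sigma> > 0"
  shows "0 \<le> wE T w \<tau>"
  unfolding wE_def using assms by (intro sum_nonneg) (auto intro: less_imp_le)

lemma m_vert_eq_sum_faces:
  assumes "finite E" and TE: "T \<subseteq> Pow E" and "\<tau> \<in> E" and "v \<in> \<tau>"
  shows "m_vert E T w v \<tau> = (\<Sum>\<sigma>\<in>{\<sigma>\<in>T. \<tau> \<in> \<sigma>}. w \<sigma> * (real (card {\<tau>'\<in>\<sigma>. v \<in> \<tau>'}) - 1))"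
proof -
  have "finite T"
    using assms(1) TE by (meson finite_Pow_iff finite_subset)
  define N where "N = {\<tau>'. link_adj E T v \<tau> \<tau>'}"
  have "finite N"
    unfolding N_def link_adj_def Ev_def by (rule finite_subset[OF _ \<open>finite E\<close>]) auto
  have "m_vert E T w v \<tau> = (\<Sum>\<tau>'\<in>N. \<Sum>\<sigma>\<in>{\<sigma>\<in>{\<sigma>\<in>T. \<tau> \<in> \<sigma>}. \<tau>' \<in> \<sigma>}. w \<sigma>)"
    unfolding m_vert_def m_edge_def N_def
    by (intro sum.cong refl arg_cong[where f="sum w"]) auto
  also have "\<dots> = (\<Sum>\<sigma>\<in>{\<sigma>\<in>T. \<tau> \<in> \<sigma>}. \<Sum>\<tau>'\<in>{\<tau>'\<in>N. \<tau>' \<in> \<sigma>}. w \<sigma>)"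
    by (rule sum.swap_restrict) (use \<open>finite N\<close> \<open>finite T\<close> in auto)
  also have "\<dots> = (\<Sum>\<sigma>\<in>{\<sigma>\<in>T. \<tau> \<in> \<sigma>}. w \<sigma> * (real (card {\<tau>'\<in>\<sigma>. v \<in> \<tau>'}) - 1))"
  proof (rule sum.cong[OF refl])
    fix \<sigma> assume \<sigma>: "\<sigma> \<in> {\<sigma>\<in>T. \<tau> \<in> \<sigma>}"
    then have "finite \<sigma>" using TE \<open>finite E\<close> finite_subset by blast
    have "{\<tau>'\<in>N. \<tau>' \<in> \<sigma>} = {\<tau>'\<in>\<sigma>. v \<in> \<tau>'} - {\<tau>}"
      using \<sigma> TE assms(3,4) unfolding N_def link_adj_def Ev_def by auto
    moreover have "\<tau> \<in> {\<tau>'\<in>\<sigma>. v \<in> \<tau>'}" and "finite {\<tau>'\<in>\<sigma>. v \<in> \<tau>'}"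
      using \<sigma> assms(4) \<open>finite \<sigma>\<close> by auto
    moreover from calculation(2,3) have "0 < card {\<tau>'\<in>\<sigma>. v \<in> \<tau>'}"
      using card_gt_0_iff by blast
    ultimately have "card {\<tau>'\<in>N. \<tau>' \<in> \<sigma>} = real (card {\<tau>'\<in>\<sigma>. v \<in> \<tau>'}) - 1"
      by (simp add: card_Diff_singleton of_nat_diff)
    then show "(\<Sum>\<tau>'\<in>{\<tau>'\<in>N. \<tau>' \<in> \<sigma>}. w \<sigma>) = w \<sigma> * (real (card {\<tau>'\<in>\<sigma>. v \<in> \<tau>'}) - 1)"
      by (simp add: mult.commute)
  qed
  finally show ?thesis .
qed

lemma wE_le_m_vert:
  assumes X: "two_layer_system s k K V E T" and wpos: "\<forall>\<sigma>\<in>T. w \<sigma> > 0"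
    and "\<tau> \<in> E" and "v \<in> \<tau>"
  shows "wE T w \<tau> \<le> m_vert E T w v \<tau>"
proof -
  have "T \<subseteq> Pow E" using X unfolding two_layer_system_def by auto
  have "wE T w \<tau> \<le> (\<Sum>\<sigma>\<in>{\<sigma>\<in>T. \<tau> \<in> \<sigma>}. w \<sigma> * (real (card {\<tau>'\<in>\<sigma>. v \<in> \<tau>'}) - 1))"
    unfolding wE_def
  proof (rule sum_mono)
    fix \<sigma> assume "\<sigma> \<in> {\<sigma>\<in>T. \<tau> \<in> \<sigma>}"
    then have "0 < w \<sigma>" and "2 \<le> real (card {\<tau>'\<in>\<sigma>. v \<in> \<tau>'})"
      using wpos two_layer_system_multiplicity_bounds(1)[OF X _ _ \<open>v \<in> \<tau>\<close>] by auto
    then show "w \<sigma> \<le> w \<sigma> * (real (card {\<tau>'\<in>\<sigma>. v \<in> \<tau>'}) - 1)"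
      by (simp add: mult_le_cancel_left1)
  qed
  also have "\<dots> = m_vert E T w v \<tau>"
    using m_vert_eq_sum_faces[OF two_layer_system_finite_edges[OF X] \<open>T \<subseteq> Pow E\<close> assms(3,4)] ..
  finally show ?thesis .
qed

lemma m_vert_le_wE:
  assumes X: "two_layer_system s k K V E T" and wpos: "\<forall>\<sigma>\<in>T. w \<sigma> > 0"
    and "\<tau> \<in> E" and "v \<in> \<tau>"
  shows "m_vert E T w v \<tau> \<le> (real s - 1) * wE T w \<tau>"
proof -
  have "T \<subseteq> Pow E" using X unfolding two_layer_system_def by auto
  have "m_vert E T w v \<tau> = (\<Sum>\<sigma>\<in>{\<sigma>\<in>T. \<tau> \<in> \<sigma>}. w \<sigma> * (real (card {\<tau>'\<in>\<sigma>. v \<in> \<tau>'}) - 1))"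
    by (rule m_vert_eq_sum_faces[OF two_layer_system_finite_edges[OF X] \<open>T \<subseteq> Pow E\<close> assms(3,4)])
  also have "\<dots> \<le> (real s - 1) * wE T w \<tau>"
    unfolding wE_def sum_distrib_left
  proof (rule sum_mono)
    fix \<sigma> assume "\<sigma> \<in> {\<sigma>\<in>T. \<tau> \<in> \<sigma>}"
    then have "0 < w \<sigma>" and "real (card {\<tau>'\<in>\<sigma>. v \<in> \<tau>'}) \<le> real s"
      using wpos two_layer_system_multiplicity_bounds(2)[OF X _ _ \<open>v \<in> \<tau>\<close>] by auto
    then show "w \<sigma> * (real (card {\<tau>'\<in>\<sigma>. v \<in> \<tau>'}) - 1) \<le> (real s - 1) * w \<sigma>"
      by (simp add: mult.commute)
  qed
  finally show ?thesis .
qed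

lemma sum_level_sets_eq:
  assumes "finite A" and "\<forall>\<tau>\<in>A. card (U \<inter> \<tau>) \<le> k"
  shows "(\<Sum>i=1..k. real i * wEset T w (level_set A U i))
       = (\<Sum>\<tau>\<in>A. real (card (U \<inter> \<tau>)) * wE T w \<tau>)"
proof -
  have "(\<Sum>i=1..k. real i * wEset T w (level_set A U i))
      = (\<Sum>i\<in>{1..k}. \<Sum>\<tau>\<in>{\<tau>\<in>A. card (U \<inter> \<tau>) = i}. real (card (U \<inter> \<tau>)) * wE T w \<tau>)"
    unfolding wEset_def level_set_def sum_distrib_left by (intro sum.cong refl) auto
  also have "\<dots> = (\<Sum>\<tau>\<in>A. \<Sum>i\<in>{i\<in>{1..k}. card (U \<inter> \<tau>) = i}. real (card (U \<inter> \<tau>)) * wE T w \<tau>)"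
    by (rule sum.swap_restrict) (use assms(1) in auto)
  also have "\<dots> = (\<Sum>\<tau>\<in>A. real (card (U \<inter> \<tau>)) * wE T w \<tau>)"
  proof (rule sum.cong[OF refl])
    fix \<tau> assume "\<tau> \<in> A"
    then have "{i\<in>{1..k}. card (U \<inter> \<tau>) = i} = (if card (U \<inter> \<tau>) = 0 then {} else {card (U \<inter> \<tau>)})"
      using assms(2) by auto
    then show "(\<Sum>i\<in>{i\<in>{1..k}. card (U \<inter> \<tau>) = i}. real (card (U \<inter> \<tau>)) * wE T w \<tau>)
        = real (card (U \<inter> \<tau>)) * wE T w \<tau>"
      by simp
  qed
  finally show ?thesis .
qed

lemma sum_m_set_eq_sum_edges:
  assumes "finite A" and "finite U" and "A \<subseteq> E"
  shows "(\<Sum>v\<in>U. m_set E T w v (A \<inter> Ev E v)) = (\<Sum>\<tau>\<in>A. \<Sum>v\<in>U \<inter> \<tau>. m_vert E T w v \<tau>)"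
proof -
  have "(\<Sum>v\<in>U. m_set E T w v (A \<inter> Ev E v)) = (\<Sum>v\<in>U. \<Sum>\<tau>\<in>{\<tau>\<in>A. v \<in> \<tau>}. m_vert E T w v \<tau>)"
    unfolding m_set_def Ev_def by (intro sum.cong refl arg_cong[where f="sum _"]) (use assms(3) in auto)
  also have "\<dots> = (\<Sum>\<tau>\<in>A. \<Sum>v\<in>{v\<in>U. v \<in> \<tau>}. m_vert E T w v \<tau>)"
    by (rule sum.swap_restrict) (use assms(1,2) in auto)
  also have "\<dots> = (\<Sum>\<tau>\<in>A. \<Sum>v\<in>U \<inter> \<tau>. m_vert E T w v \<tau>)"
    by (simp add: Int_def)
  finally show ?thesis .
qed

theorem proposition2p9:
  fixes s k K :: nat and V :: "'v set" and E :: "'v set set" and T :: "'v set set set"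
    and w :: "'v set set \<Rightarrow> real" and A :: "'v set set" and U :: "'v set"
  assumes X: "two_layer_system s k K V E T"
    and wpos: "\<forall>\<sigma>\<in>T. w \<sigma> > 0"
    and A: "A \<subseteq> E" and U: "U \<subseteq> V"
  shows "(\<Sum>i=1..k. real i * wEset T w (level_set A U i))
           \<le> (\<Sum>v\<in>U. m_set E T w v (A \<inter> Ev E v))
       \<and> (\<Sum>v\<in>U. m_set E T w v (A \<inter> Ev E v))
           \<le> (real s - 1) * (\<Sum>i=1..k. real i * wEset T w (level_set A U i))
       \<and> (\<Sum>v\<in>U. m_set E T w v (A \<inter> Ev E v)) \<le> (real s - 1) * real k * wEset T w A"
proof -
  have "finite V" and card_k: "\<forall>\<tau>\<in>E. card \<tau> = k" and "0 < s" and "E \<subseteq> Pow V"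
    using X unfolding two_layer_system_def by auto
  have "finite A" "finite U"
    using two_layer_system_finite_edges[OF X] A U \<open>finite V\<close> finite_subset by blast+
  have c_le_k: "\<forall>\<tau>\<in>A. card (U \<inter> \<tau>) \<le> k"
    using A card_k \<open>E \<subseteq> Pow V\<close> \<open>finite V\<close> by (metis Int_lower2 PowD card_mono finite_subset subsetD)
  define S where "S = (\<Sum>\<tau>\<in>A. real (card (U \<inter> \<tau>)) * wE T w \<tau>)"
  have levels: "(\<Sum>i=1..k. real i * wEset T w (level_set A U i)) = S"
    unfolding S_def using sum_level_sets_eq[OF \<open>finite A\<close> c_le_k] .
  have M: "(\<Sum>v\<in>U. m_set E T w v (A \<inter> Ev E v)) = (\<Sum>\<tau>\<in>A. \<Sum>v\<in>U \<inter> \<tau>. m_vert E T w v \<tau>)"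
    using sum_m_set_eq_sum_edges[OF \<open>finite A\<close> \<open>finite U\<close> A] .
  have "real (card (U \<inter> \<tau>)) * wE T w \<tau> \<le> (\<Sum>v\<in>U \<inter> \<tau>. m_vert E T w v \<tau>)"
    and "(\<Sum>v\<in>U \<inter> \<tau>. m_vert E T w v \<tau>) \<le> (real s - 1) * (real (card (U \<inter> \<tau>)) * wE T w \<tau>)"
    if "\<tau> \<in> A" for \<tau>
    using that A sum_bounded_below[of "U \<inter> \<tau>" "wE T w \<tau>"] sum_bounded_above[of "U \<inter> \<tau>" _ "(real s - 1) * wE T w \<tau>"]
      wE_le_m_vert[OF X wpos] m_vert_le_wE[OF X wpos]
    by (auto simp: mult.left_commute)
  then have "S \<le> (\<Sum>\<tau>\<in>A. \<Sum>v\<in>U \<inter> \<tau>. m_vert E T w v \<tau>)"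
    and "(\<Sum>\<tau>\<in>A. \<Sum>v\<in>U \<inter> \<tau>. m_vert E T w v \<tau>) \<le> (real s - 1) * S"
    unfolding S_def sum_distrib_left by (auto intro: sum_mono)
  moreover have "(real s - 1) * S \<le> (real s - 1) * (real k * wEset T w A)"
    unfolding S_def wEset_def sum_distrib_left using c_le_k \<open>0 < s\<close>
    by (intro mult_left_mono sum_mono mult_right_mono wE_nonneg[OF wpos]) auto
  ultimately show ?thesis
    using levels M by (simp add: mult.assoc)
qed

end
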